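(* For every $\mu\in\mathbb{R}$, the Sprott vector field satisfies on $\mathbb{R}^3\setminus\Delta$ $$-0.41\rho-w-\tfrac{\sqrt3}{2}\le d\theta(f_\mu)\le0.41\rho-w-\tfrac{\sqrt3}{2},$$ where $w:=(x+y+z)/\sqrt3$ and $\rho:=\|\mathbf{x}_\perp\|$.
   Context: The Sprott vector field $f_\mu$ on $\mathbb{R}^3$ is $\dot x=y^2-z-\mu x$, $\dot y=z^2-x-\mu y$, $\dot z=x^2-y-\mu z$. $\Delta:=\mathrm{span}\{(1,1,1)\}$; $\mathbf{x}_\perp$ is the orthogonal projection of $\mathbf{x}=(x,y,z)$ onto $\Delta^\perp$, with $\|\mathbf{x}_\perp\|^2=\tfrac23(x^2+y^2+z^2-xy-yz-zx)$; $d\theta:=\frac{1}{\sqrt3}\frac{(z-y)dx+(x-z)dy+(y-x)dz}{\|\mathbf{x}_\perp\|^2}$ on $\mathbb{R}^3\setminus\Delta$. *)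

theory Defs
  imports "HOL-Analysis.Analysis"
begin

definition sprott :: "real \<Rightarrow> real \<times> real \<times> real \<Rightarrow> real \<times> real \<times> real" where
  "sprott \<mu> p = (case p of (x, y, z) \<Rightarrow>
     (y^2 - z - \<mu> * x, z^2 - x - \<mu> * y, x^2 - y - \<mu> * z))"

definition diag :: "(real \<times> real \<times> real) set" where
  "diag = {(t, t, t) | t. True}"

text \<open>Squared norm of the orthogonal projection onto the complement of Delta.\<close>
definition perp_norm_sq :: "real \<times> real \<times> real \<Rightarrow> real" where
  "perp_norm_sq p = (case p of (x, y, z) \<Rightarrow>
     2/3 * (x^2 + y^2 + z^2 - x*y - y*z - z*x))"

definition dtheta :: "real \<times> real \<times> real \<Rightarrow> real \<times> real \<times> real \<Rightarrow> real" where
  "dtheta p v = (case p of (x, y, z) \<Rightarrow> case v of (a, b, c) \<Rightarrow>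
     (1 / sqrt 3) * ((z - y) * a + (x - z) * b + (y - x) * c) / perp_norm_sq p)"

end

theory Submission
  imports Defs
begin

text \<open>The \<open>\<mu>\<close>-terms of \<open>d\<theta>(f\<^sub>\<mu>)\<close> cancel because \<open>(z - y, x - z, y - x)\<close> is orthogonal to
  \<open>(x, y, z)\<close>, and the remaining cubic numerator splits off \<open>-(w + \<surd>3/2)\<close> times the
  denominator. What is left is \<open>P / (\<surd>3 N)\<close> with \<open>N = \<parallel>x\<^sub>\<perp>\<parallel>\<^sup>2\<close> and a cubic \<open>P\<close> in the
  differences of the coordinates; the discriminant of the depressed cubic gives \<open>2 P\<^sup>2 \<le> N\<^sup>3\<close>,
  hence \<open>|P / (\<surd>3 N)| \<le> \<rho> / \<surd>6\<close>, and \<open>1 / \<surd>6 < 0.41\<close>.\<close>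

definition perp_cubic :: "real \<times> real \<times> real \<Rightarrow> real" where
  "perp_cubic p = (case p of (x, y, z) \<Rightarrow> (x - z)^2 * (y - z) - ((x - z)^3 + (y - z)^3) / 3)"

lemma perp_norm_sq_pos:
  assumes "(x, y, z) \<notin> diag"
  shows "perp_norm_sq (x, y, z) > 0"
proof -
  have squares: "perp_norm_sq (x, y, z) = ((x - y)^2 + (y - z)^2 + (z - x)^2) / 3"
    unfolding perp_norm_sq_def by (simp add: power2_eq_square field_simps)
  have "(x - y)^2 + (y - z)^2 > 0"
    using assms unfolding diag_def sum_power2_gt_zero_iff by auto
  then show ?thesis
    unfolding squares by (rule divide_pos_pos[OF add_pos_nonneg]) simp_all
qed

lemma perp_cubic_sq_le: "2 * (perp_cubic p)^2 \<le> (perp_norm_sq p)^3"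
proof (cases p)
  case (fields x y z)
  define a where "a = x - z"
  define b where "b = y - z"
  have N: "perp_norm_sq p = 2/3 * (a^2 - a*b + b^2)"
    unfolding fields perp_norm_sq_def a_def b_def by (simp add: power2_eq_square algebra_simps)
  have P: "perp_cubic p = a^2 * b - (a^3 + b^3) / 3"
    unfolding fields perp_cubic_def a_def b_def by simp
  \<comment> \<open>the discriminant of the cubic, up to a positive factor\<close>
  have "(perp_norm_sq p)^3 - 2 * (perp_cubic p)^2 = 2/27 * (a^3 + 3*a^2*b - 6*a*b^2 + b^3)^2"
    unfolding N P by (simp add: power2_eq_square power3_eq_cube field_simps)
  moreover have "0 \<le> 2/27 * (a^3 + 3*a^2*b - 6*a*b^2 + b^3)^2"
    by simp
  ultimately show ?thesis
    by linarith
qed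

lemma dtheta_sprott:
  assumes "(x, y, z) \<notin> diag"
  shows "dtheta (x, y, z) (sprott \<mu> (x, y, z))
    = perp_cubic (x, y, z) / (sqrt 3 * perp_norm_sq (x, y, z)) - (x + y + z) / sqrt 3 - sqrt 3 / 2"
proof -
  define N where "N = perp_norm_sq (x, y, z)"
  have "N > 0"
    using perp_norm_sq_pos[OF assms] by (simp add: N_def)
  have numerator: "(z - y) * (y^2 - z - \<mu>*x) + (x - z) * (z^2 - x - \<mu>*y) + (y - x) * (x^2 - y - \<mu>*z)
      = perp_cubic (x, y, z) - (x + y + z) * N - 3/2 * N"
    unfolding perp_cubic_def N_def perp_norm_sq_def
    by (simp add: power2_eq_square power3_eq_cube field_simps)
  have "sqrt 3 * sqrt 3 = (3::real)"
    by simp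
  with \<open>N > 0\<close> have "(perp_cubic (x, y, z) - (x + y + z) * N - 3/2 * N) / (sqrt 3 * N)
      = perp_cubic (x, y, z) / (sqrt 3 * N) - (x + y + z) / sqrt 3 - sqrt 3 / 2"
    by (simp add: field_simps)
  with numerator show ?thesis
    unfolding dtheta_def sprott_def N_def by simp
qed

lemma perp_cubic_quotient_bound:
  assumes "perp_norm_sq p > 0"
  shows "\<bar>perp_cubic p / (sqrt 3 * perp_norm_sq p)\<bar> \<le> sqrt (perp_norm_sq p) / sqrt 6"
proof -
  define N where "N = perp_norm_sq p"
  have "N > 0"
    using assms by (simp add: N_def)
  have "(perp_cubic p / (sqrt 3 * N))^2 = (perp_cubic p)^2 / (3 * N^2)"
    by (simp add: power_divide power_mult_distrib)
  also have "\<dots> \<le> (N^3 / 2) / (3 * N^2)"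
    using perp_cubic_sq_le[of p] \<open>N > 0\<close> unfolding N_def
    by (intro divide_right_mono) simp_all
  also have "\<dots> = (sqrt N / sqrt 6)^2"
    using \<open>N > 0\<close> by (simp add: power_divide power2_eq_square power3_eq_cube)
  finally have "\<bar>perp_cubic p / (sqrt 3 * N)\<bar> \<le> \<bar>sqrt N / sqrt 6\<bar>"
    by (simp only: abs_le_square_iff)
  then show ?thesis
    unfolding N_def using assms by simp
qed

theorem lemma9:
  fixes \<mu> x y z :: real
  assumes "(x, y, z) \<notin> diag"
  defines "w \<equiv> (x + y + z) / sqrt 3"
    and "\<rho> \<equiv> sqrt (perp_norm_sq (x, y, z))"
  shows "- 0.41 * \<rho> - w - sqrt 3 / 2 \<le> dtheta (x, y, z) (sprott \<mu> (x, y, z))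
       \<and> dtheta (x, y, z) (sprott \<mu> (x, y, z)) \<le> 0.41 * \<rho> - w - sqrt 3 / 2"
proof -
  have "\<bar>perp_cubic (x, y, z) / (sqrt 3 * perp_norm_sq (x, y, z))\<bar> \<le> \<rho> / sqrt 6"
    unfolding \<rho>_def by (rule perp_cubic_quotient_bound[OF perp_norm_sq_pos[OF assms(1)]])
  also have "\<dots> = \<rho> * (1 / sqrt 6)"
    by simp
  also have "\<dots> \<le> \<rho> * 0.41"
  proof (rule mult_left_mono)
    have "100 / 41 \<le> sqrt (6::real)"
      by (rule real_le_rsqrt) (simp add: power2_eq_square)
    then show "1 / sqrt 6 \<le> (0.41::real)"
      by (simp add: divide_simps)
    show "0 \<le> \<rho>"
      unfolding \<rho>_def using perp_norm_sq_pos[OF assms(1)] by simp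
  qed
  finally show ?thesis
    unfolding dtheta_sprott[OF assms(1)] w_def abs_le_iff by (simp add: mult.commute)
qed

end
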